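(* Let $\phi(s)=c_0s+\sum_{n\ge1}c_n n^{-s}$, where $c_0\in\mathbb{N}_0$, the $c_n$ are complex numbers, and $\phi$ is non-constant. If $\operatorname{Re}c_1\ge\sum_{n\ge2}|c_n|$, then the composition operator $C_\phi f=f\circ\phi$ is bounded on $\mathcal{A}^+$; if $\operatorname{Re}c_1>\sum_{n\ge2}|c_n|$, then $C_\phi$ is compact on $\mathcal{A}^+$.
   Context: The Wiener–Dirichlet algebra $\mathcal{A}^+$ is the set of functions $f(s)=\sum_{n\ge1}a_n n^{-s}$ with $\|f\|_{\mathcal{A}^+}=\sum_{n\ge1}|a_n|<\infty$, viewed as functions on $\{\operatorname{Re}s\ge0\}$; it is a commutative unital Banach algebra under pointwise multiplication. $\mathbb{N}_0=\{0,1,2,\dots\}$. *)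

theory Defs
  imports "HOL-Analysis.Analysis"
begin

definition dirichlet_val :: "(nat \<Rightarrow> complex) \<Rightarrow> complex \<Rightarrow> complex" where
  "dirichlet_val a s = (\<Sum>\<^sub>\<infinity>n\<in>{1..}. a n * (of_nat n :: complex) powr (- s))"

definition wd_rep :: "(nat \<Rightarrow> complex) \<Rightarrow> (complex \<Rightarrow> complex) \<Rightarrow> bool" where
  "wd_rep a f \<longleftrightarrow> (\<lambda>n. norm (a n)) summable_on {1..} \<and>
     (\<forall>s. 0 \<le> Re s \<longrightarrow> f s = dirichlet_val a s)"

definition wd_algebra :: "(complex \<Rightarrow> complex) set" where
  "wd_algebra = {f. \<exists>a. wd_rep a f}"

text \<open>Norm: sum of the absolute values of the Dirichlet coefficients (taken as an
  infimum over representing coefficient sequences, which are in fact unique).\<close>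
definition wd_norm :: "(complex \<Rightarrow> complex) \<Rightarrow> real" where
  "wd_norm f = Inf {(\<Sum>\<^sub>\<infinity>n\<in>{1..}. norm (a n)) | a. wd_rep a f}"

definition symbol_phi :: "nat \<Rightarrow> (nat \<Rightarrow> complex) \<Rightarrow> complex \<Rightarrow> complex" where
  "symbol_phi c0 c s = of_nat c0 * s + dirichlet_val c s"

definition comp_op_bounded :: "(complex \<Rightarrow> complex) \<Rightarrow> bool" where
  "comp_op_bounded \<phi> \<longleftrightarrow>
     (\<forall>f\<in>wd_algebra. f \<circ> \<phi> \<in> wd_algebra) \<and>
     (\<exists>C. \<forall>f\<in>wd_algebra. wd_norm (f \<circ> \<phi>) \<le> C * wd_norm f)"

text \<open>C_phi f = f \<circ> phi is compact on A+: it maps A+ into A+ and the image of the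
  closed unit ball is relatively compact, i.e. every sequence in the unit ball has a
  subsequence whose images converge in A+.\<close>
definition comp_op_compact :: "(complex \<Rightarrow> complex) \<Rightarrow> bool" where
  "comp_op_compact \<phi> \<longleftrightarrow>
     (\<forall>f\<in>wd_algebra. f \<circ> \<phi> \<in> wd_algebra) \<and>
     (\<forall>F :: nat \<Rightarrow> complex \<Rightarrow> complex.
        (\<forall>k. F k \<in> wd_algebra \<and> wd_norm (F k) \<le> 1) \<longrightarrow>
        (\<exists>r g. strict_mono r \<and> g \<in> wd_algebra \<and>
           (\<lambda>k. wd_norm (\<lambda>s. (F (r k) \<circ> \<phi>) s - g s)) \<longlonglongrightarrow> 0))"

end

theory Submission
  imports Defs
begin

(*
  For Re s \<ge> 0 the symbol is \<phi>(s) = c0 s + c1 + \<psi>(s) with \<psi>(s) = \<Sum>n\<ge>2. c n n^-s, so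
  m^-\<phi>(s) = m^-c1 (m^-s)^c0 exp(-\<psi>(s) log m). Expanding the exponential and each power
  \<psi>(s)^k as a sum over k-tuples of indices writes m^-\<phi>(s) as an absolutely convergent Dirichlet
  series whose coefficients have \<ell>1-norm m^(\<Sum>n\<ge>2. |c n| - Re c1), which is at most 1 when
  Re c1 \<ge> \<Sum>n\<ge>2. |c n|. Summing over m, f \<circ> \<phi> = \<Sum>m. a m m^-\<phi>(s) lies in A+ with norm at most
  that of f.

  Under the strict inequality this weight tends to 0 as m grows. A bounded sequence in A+ has a
  subsequence whose coefficients converge pointwise (Tychonoff), and against a weight vanishing
  at infinity, pointwise convergence of uniformly \<ell>1-bounded coefficients becomes convergence
  in the weighted \<ell>1-norm, which dominates the norm of the difference of the images.
*)

section \<open>Absolutely summable families\<close>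

lemma has_sum_fibres:
  fixes g :: "'i \<Rightarrow> 'c::{banach, uniform_topological_group_add}"
  assumes sum: "(g has_sum S) I" and lam: "lam ` I \<subseteq> N"
  shows "((\<lambda>n. \<Sum>\<^sub>\<infinity>i\<in>{i\<in>I. lam i = n}. g i) has_sum S) N"
proof -
  define B where "B n = {i\<in>I. lam i = n}" for n
  have inj: "inj_on snd (Sigma N B)" by (auto simp: B_def inj_on_def)
  have img: "snd ` Sigma N B = I" using lam by (force simp: B_def image_iff)
  have "((g \<circ> snd) has_sum S) (Sigma N B)"
    using has_sum_reindex[OF inj, of g S] sum img by simp
  then show ?thesis
    unfolding B_def[symmetric]
  proof (rule has_sum_Sigma')
    fix n
    have "g summable_on B n"
      by (rule summable_on_subset_banach[OF has_sum_imp_summable[OF sum]]) (auto simp: B_def)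
    then show "((\<lambda>i. (g \<circ> snd) (n, i)) has_sum infsum g (B n)) (B n)"
      by simp
  qed
qed

lemma summable_on_norm_diff:
  assumes a: "(\<lambda>n. norm (a n)) summable_on A" and b: "(\<lambda>n. norm (b n)) summable_on A"
  shows "(\<lambda>n. norm (a n - b n)) summable_on A"
    and "(\<Sum>\<^sub>\<infinity>n\<in>A. norm (a n - b n)) \<le> (\<Sum>\<^sub>\<infinity>n\<in>A. norm (a n)) + (\<Sum>\<^sub>\<infinity>n\<in>A. norm (b n))"
proof -
  show sum: "(\<lambda>n. norm (a n - b n)) summable_on A"
    by (rule summable_on_comparison_test[OF summable_on_add[OF a b]]) (auto intro: norm_triangle_ineq4)
  show "(\<Sum>\<^sub>\<infinity>n\<in>A. norm (a n - b n)) \<le> (\<Sum>\<^sub>\<infinity>n\<in>A. norm (a n)) + (\<Sum>\<^sub>\<infinity>n\<in>A. norm (b n))"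
    using infsum_mono[OF sum summable_on_add[OF a b] norm_triangle_ineq4] infsum_add[OF a b] by simp
qed

lemma has_sum_exp:
  fixes x :: "'a::{real_normed_field, banach}"
  shows "((\<lambda>k. x ^ k / fact k) has_sum exp x) UNIV"
proof -
  have "summable (\<lambda>k. norm (x ^ k /\<^sub>R fact k))"
    using summable_exp_generic[of "norm x"] by (simp add: norm_power)
  then have "((\<lambda>k. x ^ k /\<^sub>R fact k) has_sum exp x) UNIV"
    using exp_converges by (rule norm_summable_imp_has_sum)
  then show ?thesis by (simp add: scaleR_conv_of_real divide_inverse_commute)
qed

lemma summable_on_norm_prod_PiE:
  fixes f :: "'a \<Rightarrow> 'b \<Rightarrow> 'c::real_normed_field"
  assumes fin: "finite A" and sum: "\<And>x. x \<in> A \<Longrightarrow> (\<lambda>y. norm (f x y)) summable_on B x"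
  shows "(\<lambda>g. norm (\<Prod>x\<in>A. f x (g x))) summable_on PiE A B"
proof (rule nonneg_bdd_above_summable_on)
  show "bdd_above (sum (\<lambda>g. norm (\<Prod>x\<in>A. f x (g x))) ` {G. G \<subseteq> PiE A B \<and> finite G})"
  proof (rule bdd_aboveI, clarsimp)
    fix G assume G: "G \<subseteq> PiE A B" "finite G"
    define B' where "B' x = (\<lambda>g. g x) ` G" for x
    have fin': "finite (B' x)" for x using G by (simp add: B'_def)
    have "G \<subseteq> PiE A B'" using G by (auto simp: B'_def PiE_def Pi_def)
    then have "(\<Sum>g\<in>G. norm (\<Prod>x\<in>A. f x (g x))) \<le> (\<Sum>g\<in>PiE A B'. norm (\<Prod>x\<in>A. f x (g x)))"
      by (intro sum_mono2 finite_PiE fin fin') auto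
    also have "\<dots> = (\<Sum>g\<in>PiE A B'. \<Prod>x\<in>A. norm (f x (g x)))"
      by (simp only: prod_norm)
    also have "\<dots> = (\<Prod>x\<in>A. \<Sum>y\<in>B' x. norm (f x y))"
      by (rule prod_sum_PiE[symmetric]) (use fin fin' in auto)
    also have "\<dots> \<le> (\<Prod>x\<in>A. \<Sum>\<^sub>\<infinity>y\<in>B x. norm (f x y))"
    proof (rule prod_mono, intro conjI)
      fix x assume x: "x \<in> A"
      show "0 \<le> (\<Sum>y\<in>B' x. norm (f x y))" by (simp add: sum_nonneg)
      have "B' x \<subseteq> B x" using G x by (auto simp: B'_def PiE_def Pi_def)
      then show "(\<Sum>y\<in>B' x. norm (f x y)) \<le> (\<Sum>\<^sub>\<infinity>y\<in>B x. norm (f x y))"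
        using sum[OF x] fin' by (intro finite_sum_le_infsum) auto
    qed
    finally show "(\<Sum>g\<in>G. norm (\<Prod>x\<in>A. f x (g x))) \<le> (\<Prod>x\<in>A. \<Sum>\<^sub>\<infinity>y\<in>B x. norm (f x y))" .
  qed
qed simp

lemma has_sum_prod_PiE_power:
  fixes z :: "'b \<Rightarrow> 'a::{real_normed_field, banach}" and k :: nat
  assumes z: "(\<lambda>n. norm (z n)) summable_on A"
  shows "((\<lambda>p. \<Prod>i<k. z (p i)) has_sum (infsum z A) ^ k) (PiE {..<k} (\<lambda>_. A))"
proof -
  have "(\<lambda>p. \<Prod>i<k. z (p i)) summable_on PiE {..<k} (\<lambda>_. A)"
    by (rule abs_summable_summable, rule summable_on_norm_prod_PiE) (use z in auto)
  moreover have "infsum (\<lambda>p. \<Prod>i<k. z (p i)) (PiE {..<k} (\<lambda>_. A)) = (\<Prod>i<k. infsum z A)"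
    by (rule infsum_prod_PiE_abs) (use z in auto)
  ultimately show ?thesis
    by (metis has_sum_infsum prod_constant card_lessThan)
qed

text \<open>A pair \<open>(k, p)\<close> indexes a term of the \<open>k\<close>-th power of a series over \<open>A\<close>:
  \<open>p\<close> picks one index from each of the \<open>k\<close> factors.\<close>
definition finite_tuples :: "'b set \<Rightarrow> (nat \<times> (nat \<Rightarrow> 'b)) set" where
  "finite_tuples A = (SIGMA k:UNIV. PiE {..<k} (\<lambda>_. A))"

lemma has_sum_norm_exp_tuples:
  fixes z :: "'b \<Rightarrow> 'a::{real_normed_field, banach}"
  assumes z: "(\<lambda>n. norm (z n)) summable_on A"
  shows "((\<lambda>(k, p). norm (x ^ k / fact k * (\<Prod>i<k. z (p i))))
           has_sum exp (norm x * (\<Sum>\<^sub>\<infinity>n\<in>A. norm (z n)))) (finite_tuples A)"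
proof -
  define S where "S = (\<Sum>\<^sub>\<infinity>n\<in>A. norm (z n))"
  have norm_z: "(\<lambda>n. norm (norm (z n))) summable_on A" using z by simp
  have inner: "((\<lambda>p. norm (x ^ k / fact k * (\<Prod>i<k. z (p i))))
      has_sum norm x ^ k / fact k * S ^ k) (PiE {..<k} (\<lambda>_. A))" for k
    using has_sum_cmult_right[OF has_sum_prod_PiE_power[OF norm_z, of k], of "norm x ^ k / fact k"]
    by (simp add: S_def norm_mult norm_divide norm_power prod_norm)
  have outer: "((\<lambda>k. norm x ^ k / fact k * S ^ k) has_sum exp (norm x * S)) UNIV"
    using has_sum_exp[of "norm x * S"] by (simp add: power_mult_distrib)
  have "(\<lambda>(k, p). norm (x ^ k / fact k * (\<Prod>i<k. z (p i)))) summable_on finite_tuples A"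
    unfolding finite_tuples_def
    by (rule summable_on_SigmaI[OF _ has_sum_imp_summable[OF outer]]) (use inner in auto)
  then show ?thesis
    unfolding finite_tuples_def S_def[symmetric]
    by (rule has_sum_SigmaI[OF _ outer, rotated]) (use inner in auto)
qed

lemma has_sum_exp_tuples:
  fixes z :: "'b \<Rightarrow> 'a::{real_normed_field, banach}"
  assumes z: "(\<lambda>n. norm (z n)) summable_on A"
  shows "((\<lambda>(k, p). x ^ k / fact k * (\<Prod>i<k. z (p i))) has_sum exp (x * infsum z A))
           (finite_tuples A)"
proof -
  have inner: "((\<lambda>p. x ^ k / fact k * (\<Prod>i<k. z (p i)))
      has_sum x ^ k / fact k * (infsum z A) ^ k) (PiE {..<k} (\<lambda>_. A))" for k
    by (rule has_sum_cmult_right[OF has_sum_prod_PiE_power[OF z]])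
  have outer: "((\<lambda>k. x ^ k / fact k * (infsum z A) ^ k) has_sum exp (x * infsum z A)) UNIV"
    using has_sum_exp[of "x * infsum z A"] by (simp add: power_mult_distrib)
  have "(\<lambda>(k, p). x ^ k / fact k * (\<Prod>i<k. z (p i))) summable_on finite_tuples A"
    using has_sum_imp_summable[OF has_sum_norm_exp_tuples[OF z, of x]]
    by (simp only: case_prod_unfold abs_summable_summable)
  then show ?thesis
    unfolding finite_tuples_def
    by (rule has_sum_SigmaI[OF _ outer, rotated]) (use inner in auto)
qed

lemma norm_of_nat_powr_le_1:
  assumes "0 \<le> Re s"
  shows "norm ((of_nat n :: complex) powr (- s)) \<le> 1"
proof (cases "n = 0")
  case False
  then have "norm ((of_nat n :: complex) powr (- s)) = real n powr (- Re s)"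
    by (subst norm_powr_real_powr) auto
  also have "\<dots> \<le> 1" using assms False by (simp add: powr_minus_divide ge_one_powr_ge_zero)
  finally show ?thesis .
qed simp

lemma real_of_nat_powr_le_1: "x \<le> 0 \<Longrightarrow> real m powr x \<le> 1"
  using powr_mono[of x 0 "real m"] by (cases "m = 0") auto

lemma norm_dirichlet_term_le:
  "0 \<le> Re s \<Longrightarrow> norm (a * (of_nat n :: complex) powr (- s)) \<le> norm a"
  using norm_of_nat_powr_le_1[of s n] by (simp add: norm_mult mult_left_le)

lemma summable_on_dirichlet_terms:
  assumes "(\<lambda>i. norm (a i)) summable_on A" and "0 \<le> Re s"
  shows "(\<lambda>i. norm (a i * of_nat (lam i) powr (- s))) summable_on A"
  using assms(1) by (rule Infinite_Sum.abs_summable_on_comparison_test)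
    (use assms(2) norm_dirichlet_term_le in auto)

lemma of_nat_powr_exp:
  "n > 0 \<Longrightarrow> (of_nat n :: complex) powr z = exp (z * of_real (ln (real n)))"
  by (simp add: powr_def)

lemma of_nat_mult_powr:
  "(of_nat (a * b) :: complex) powr z = of_nat a powr z * of_nat b powr z"
  unfolding of_nat_mult by (rule powr_times_real) auto

lemma of_nat_prod_powr:
  "finite A \<Longrightarrow> (of_nat (\<Prod>j\<in>A. f j) :: complex) powr z = (\<Prod>j\<in>A. of_nat (f j) powr z)"
  by (induction A rule: finite_induct) (simp_all add: of_nat_mult_powr del: of_nat_mult of_nat_prod)

lemma of_nat_power_powr: "(of_nat (m ^ k) :: complex) powr z = (of_nat m powr z) ^ k"
  using of_nat_prod_powr[of "{..<k}" "\<lambda>_. m" z] by simp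

section \<open>The Wiener--Dirichlet algebra\<close>

lemma dirichlet_val_diff:
  assumes a: "(\<lambda>n. norm (a n)) summable_on {1..}" and b: "(\<lambda>n. norm (b n)) summable_on {1..}"
    and s: "0 \<le> Re s"
  shows "dirichlet_val (\<lambda>n. a n - b n) s = dirichlet_val a s - dirichlet_val b s"
proof -
  have "((\<lambda>n. a n * of_nat n powr (- s)) has_sum dirichlet_val a s) {1..}"
    and "((\<lambda>n. b n * of_nat n powr (- s)) has_sum dirichlet_val b s) {1..}"
    unfolding dirichlet_val_def
    using summable_on_dirichlet_terms[OF a s] summable_on_dirichlet_terms[OF b s]
    by (simp_all add: abs_summable_summable)
  from has_sum_add[OF this(1) has_sum_uminusI[OF this(2)]]
  show ?thesis
    unfolding dirichlet_val_def[of "\<lambda>n. a n - b n"] by (simp add: infsumI left_diff_distrib)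
qed

lemma wd_norm_le_coeff_sum: "wd_rep a f \<Longrightarrow> wd_norm f \<le> (\<Sum>\<^sub>\<infinity>n\<in>{1..}. norm (a n))"
  unfolding wd_norm_def by (rule cInf_lower) (auto intro!: bdd_belowI[where m = 0] infsum_nonneg)

lemma wd_norm_nonneg: "f \<in> wd_algebra \<Longrightarrow> 0 \<le> wd_norm f"
  unfolding wd_norm_def wd_algebra_def by (rule cInf_greatest) (auto intro: infsum_nonneg)

lemma wd_norm_greatest:
  assumes "f \<in> wd_algebra" and "\<And>a. wd_rep a f \<Longrightarrow> x \<le> (\<Sum>\<^sub>\<infinity>n\<in>{1..}. norm (a n))"
  shows "x \<le> wd_norm f"
  using assms unfolding wd_norm_def wd_algebra_def by (intro cInf_greatest) auto

lemma wd_rep_below_norm: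
  assumes "f \<in> wd_algebra" and "wd_norm f < B"
  obtains a where "wd_rep a f" and "(\<Sum>\<^sub>\<infinity>n\<in>{1..}. norm (a n)) < B"
  using assms cInf_lessD[of "{(\<Sum>\<^sub>\<infinity>n\<in>{1..}. norm (a n)) | a. wd_rep a f}" B]
  unfolding wd_norm_def wd_algebra_def by blast

lemma wd_algebra_of_family:
  fixes w :: "'i \<Rightarrow> complex" and lam :: "'i \<Rightarrow> nat"
  assumes w: "((\<lambda>i. norm (w i)) has_sum S) I"
    and lam: "\<And>i. i \<in> I \<Longrightarrow> lam i \<ge> 1"
    and h: "\<And>s. 0 \<le> Re s \<Longrightarrow> h s = (\<Sum>\<^sub>\<infinity>i\<in>I. w i * of_nat (lam i) powr (- s))"
  shows "h \<in> wd_algebra" and "wd_norm h \<le> S"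
proof -
  define a where "a n = (\<Sum>\<^sub>\<infinity>i\<in>{i\<in>I. lam i = n}. w i)" for n
  have lam_I: "lam ` I \<subseteq> {1..}" using lam by auto
  have fibre_sum: "((\<lambda>n. \<Sum>\<^sub>\<infinity>i\<in>{i\<in>I. lam i = n}. norm (w i)) has_sum S) {1..}"
    by (rule has_sum_fibres[OF w lam_I])
  have norm_a: "norm (a n) \<le> (\<Sum>\<^sub>\<infinity>i\<in>{i\<in>I. lam i = n}. norm (w i))" for n
    unfolding a_def
    by (rule norm_infsum_bound, rule summable_on_subset_banach[OF has_sum_imp_summable[OF w]]) auto
  have a_sum: "(\<lambda>n. norm (a n)) summable_on {1..}"
    by (rule summable_on_comparison_test[OF has_sum_imp_summable[OF fibre_sum]]) (use norm_a in auto)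
  have a_le: "(\<Sum>\<^sub>\<infinity>n\<in>{1..}. norm (a n)) \<le> S"
    using infsum_mono[OF a_sum has_sum_imp_summable[OF fibre_sum] norm_a] fibre_sum
    by (simp add: infsumI)
  have "wd_rep a h"
    unfolding wd_rep_def
  proof (intro conjI allI impI a_sum)
    fix s :: complex assume s: "0 \<le> Re s"
    have "(\<lambda>i. norm (w i * of_nat (lam i) powr (- s))) summable_on I"
      using summable_on_dirichlet_terms[OF has_sum_imp_summable[OF w] s] .
    then have "((\<lambda>i. w i * of_nat (lam i) powr (- s)) has_sum h s) I"
      using h[OF s] by (simp add: abs_summable_summable)
    from has_sum_fibres[OF this lam_I]
    have "((\<lambda>n. \<Sum>\<^sub>\<infinity>i\<in>{i\<in>I. lam i = n}. w i * of_nat n powr (- s)) has_sum h s) {1..}"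
      by (rule has_sum_cong[THEN iffD1, rotated]) (auto intro: infsum_cong)
    then show "h s = dirichlet_val a s"
      unfolding dirichlet_val_def a_def by (simp add: infsum_cmult_left' infsumI)
  qed
  then show "h \<in> wd_algebra" and "wd_norm h \<le> S"
    using wd_norm_le_coeff_sum a_le unfolding wd_algebra_def by fastforce+
qed

section \<open>Dirichlet expansion of a composition\<close>

definition dirichlet_tail :: "(nat \<Rightarrow> complex) \<Rightarrow> complex \<Rightarrow> complex" where
  "dirichlet_tail c s = (\<Sum>\<^sub>\<infinity>n\<in>{2..}. c n * of_nat n powr (- s))"

definition tail_norm :: "(nat \<Rightarrow> complex) \<Rightarrow> real" where
  "tail_norm c = (\<Sum>\<^sub>\<infinity>n\<in>{2..}. norm (c n))"

lemma symbol_phi_eq: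
  assumes c: "(\<lambda>n. norm (c n)) summable_on {2..}" and s: "0 \<le> Re s"
  shows "symbol_phi c0 c s = of_nat c0 * s + c 1 + dirichlet_tail c s"
proof -
  have "(\<lambda>n. c n * of_nat n powr (- s)) summable_on {2..}"
    using summable_on_dirichlet_terms[OF c s] by (rule abs_summable_summable)
  moreover have "{1::nat..} = insert 1 {2..}" by auto
  ultimately show ?thesis
    unfolding symbol_phi_def dirichlet_val_def dirichlet_tail_def by (simp add: infsum_insert)
qed

lemma norm_dirichlet_tail_le:
  assumes c: "(\<lambda>n. norm (c n)) summable_on {2..}" and s: "0 \<le> Re s"
  shows "norm (dirichlet_tail c s) \<le> tail_norm c"
proof -
  have "norm (dirichlet_tail c s) \<le> (\<Sum>\<^sub>\<infinity>n\<in>{2..}. norm (c n * of_nat n powr (- s)))"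
    unfolding dirichlet_tail_def by (rule norm_infsum_bound[OF summable_on_dirichlet_terms[OF c s]])
  also have "\<dots> \<le> tail_norm c"
    unfolding tail_norm_def
    by (rule infsum_mono[OF summable_on_dirichlet_terms[OF c s] c]) (rule norm_dirichlet_term_le[OF s])
  finally show ?thesis .
qed

lemma Re_symbol_phi_nonneg:
  assumes c: "(\<lambda>n. norm (c n)) summable_on {2..}" and le: "tail_norm c \<le> Re (c 1)"
    and s: "0 \<le> Re s"
  shows "0 \<le> Re (symbol_phi c0 c s)"
proof -
  have "- Re (dirichlet_tail c s) \<le> tail_norm c"
    using norm_dirichlet_tail_le[OF c s] complex_Re_le_cmod[of "- dirichlet_tail c s"] by simp
  moreover have "0 \<le> real c0 * Re s" using s by simp
  ultimately show ?thesis using le by (simp add: symbol_phi_eq[OF c s])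
qed

text \<open>Writing \<open>\<psi> = dirichlet_tail c\<close>, one has
  \<open>m powr - (c0 * s + c 1 + \<psi> s) = m powr - c 1 * (m powr - s) ^ c0 * exp (- ln m * \<psi> s)\<close>.
  Expanding the exponential and the powers of \<open>\<psi> s\<close> over \<open>finite_tuples {2..}\<close>, the tuple
  \<open>(k, p)\<close> contributes \<open>phi_coeff c m (k, p)\<close> at the frequency \<open>phi_freq c0 m (k, p)\<close>.\<close>
definition phi_coeff :: "(nat \<Rightarrow> complex) \<Rightarrow> nat \<Rightarrow> nat \<times> (nat \<Rightarrow> nat) \<Rightarrow> complex" where
  "phi_coeff c m j = (case j of (k, p) \<Rightarrow>
     of_nat m powr (- c 1) * (- of_real (ln (real m))) ^ k / fact k * (\<Prod>i<k. c (p i)))"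

definition phi_freq :: "nat \<Rightarrow> nat \<Rightarrow> nat \<times> (nat \<Rightarrow> nat) \<Rightarrow> nat" where
  "phi_freq c0 m j = (case j of (k, p) \<Rightarrow> m ^ c0 * (\<Prod>i<k. p i))"

lemma phi_freq_ge_1: "m \<ge> 1 \<Longrightarrow> j \<in> finite_tuples {2..} \<Longrightarrow> phi_freq c0 m j \<ge> 1"
  unfolding phi_freq_def finite_tuples_def
  by (auto simp: PiE_def Pi_def Suc_le_eq intro!: prod_pos) (metis less_le_trans pos2)

lemma has_sum_norm_phi_coeff:
  assumes c: "(\<lambda>n. norm (c n)) summable_on {2..}" and m: "m \<ge> 1"
  shows "((\<lambda>j. norm (phi_coeff c m j)) has_sum real m powr (tail_norm c - Re (c 1)))
           (finite_tuples {2..})"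
proof -
  define x :: complex where "x = - of_real (ln (real m))"
  define C where "C = real m powr (- Re (c 1))"
  have norm_eq: "norm (phi_coeff c m j) =
      C * (case j of (k, p) \<Rightarrow> norm (x ^ k / fact k * (\<Prod>i<k. c (p i))))" for j
    using m by (cases j) (simp add: phi_coeff_def C_def x_def norm_mult norm_divide norm_powr_real_powr)
  have exp_eq: "C * exp (norm x * tail_norm c) = real m powr (tail_norm c - Re (c 1))"
    using m by (simp add: C_def x_def powr_def exp_add[symmetric] algebra_simps)
  have "((\<lambda>j. C * (case j of (k, p) \<Rightarrow> norm (x ^ k / fact k * (\<Prod>i<k. c (p i)))))
      has_sum C * exp (norm x * tail_norm c)) (finite_tuples {2..})"
    unfolding tail_norm_def by (rule has_sum_cmult_right[OF has_sum_norm_exp_tuples[OF c]])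
  then show ?thesis by (simp only: norm_eq[symmetric] exp_eq)
qed

lemma has_sum_phi_coeff:
  assumes c: "(\<lambda>n. norm (c n)) summable_on {2..}" and m: "m \<ge> 1" and s: "0 \<le> Re s"
  shows "((\<lambda>j. phi_coeff c m j * of_nat (phi_freq c0 m j) powr (- s))
           has_sum of_nat m powr (- (of_nat c0 * s + c 1 + dirichlet_tail c s))) (finite_tuples {2..})"
proof -
  define L :: complex where "L = of_real (ln (real m))"
  define C where "C = of_nat m powr (- c 1) * (of_nat m powr (- s)) ^ c0"
  have summand: "phi_coeff c m (k, p) * of_nat (phi_freq c0 m (k, p)) powr (- s) =
      C * ((- L) ^ k / fact k * (\<Prod>i<k. c (p i) * of_nat (p i) powr (- s)))"
    for k p
  proof -
    have "of_nat (phi_freq c0 m (k, p)) powr (- s) =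
        (of_nat m powr (- s)) ^ c0 * (\<Prod>i<k. of_nat (p i) powr (- s))"
      by (simp add: phi_freq_def of_nat_mult_powr of_nat_power_powr of_nat_prod_powr
                    del: of_nat_mult of_nat_prod of_nat_power)
    then show ?thesis by (simp add: phi_coeff_def C_def L_def prod.distrib mult_ac)
  qed
  have val: "of_nat m powr (- (of_nat c0 * s + c 1 + dirichlet_tail c s)) =
      C * exp (- L * dirichlet_tail c s)"
    using m by (simp add: of_nat_powr_exp C_def L_def exp_of_nat_mult[symmetric]
                  exp_add[symmetric] algebra_simps)
  have "((\<lambda>(k, p). (- L) ^ k / fact k * (\<Prod>i<k. c (p i) * of_nat (p i) powr (- s)))
      has_sum exp (- L * dirichlet_tail c s)) (finite_tuples {2..})"
    using has_sum_exp_tuples[OF summable_on_dirichlet_terms[OF c s], of "- L"]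
    by (simp add: dirichlet_tail_def)
  moreover have "(\<lambda>j. phi_coeff c m j * of_nat (phi_freq c0 m j) powr (- s)) =
      (\<lambda>j. C * (case j of (k, p) \<Rightarrow> (- L) ^ k / fact k * (\<Prod>i<k. c (p i) * of_nat (p i) powr (- s))))"
    by (auto simp: fun_eq_iff summand)
  ultimately show ?thesis
    unfolding val by (simp add: has_sum_cmult_right)
qed

lemma has_sum_norm_comp_coeffs:
  assumes c: "(\<lambda>n. norm (c n)) summable_on {2..}"
    and d: "(\<lambda>m. norm (d m) * real m powr (tail_norm c - Re (c 1))) summable_on {1..}"
  shows "((\<lambda>(m, j). norm (d m * phi_coeff c m j)) has_sum
           (\<Sum>\<^sub>\<infinity>m\<in>{1..}. norm (d m) * real m powr (tail_norm c - Re (c 1))))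
           (SIGMA m:{1..}. finite_tuples {2..})"
proof -
  have inner: "((\<lambda>j. norm (d m * phi_coeff c m j)) has_sum
      norm (d m) * real m powr (tail_norm c - Re (c 1))) (finite_tuples {2..})"
    if "m \<in> {1..}" for m
    using has_sum_cmult_right[OF has_sum_norm_phi_coeff[OF c], of m "norm (d m)"] that
    by (simp add: norm_mult)
  have "(\<lambda>(m, j). norm (d m * phi_coeff c m j)) summable_on (SIGMA m:{1..}. finite_tuples {2..})"
    by (rule summable_on_SigmaI[OF _ d]) (use inner in auto)
  then show ?thesis
    by (rule has_sum_SigmaI[OF _ has_sum_infsum[OF d], rotated]) (use inner in auto)
qed

text \<open>The weight \<open>m powr (tail_norm c - Re (c 1))\<close> is the \<open>\<ell>\<^sup>1\<close>-norm of the expansion of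
  \<open>m powr - symbol_phi c0 c s\<close>; it is at most \<open>1\<close> exactly under the hypothesis of the theorem.\<close>
lemma wd_algebra_comp_dirichlet:
  assumes c: "(\<lambda>n. norm (c n)) summable_on {2..}"
    and d: "(\<lambda>m. norm (d m) * real m powr (tail_norm c - Re (c 1))) summable_on {1..}"
    and h: "\<And>s. 0 \<le> Re s \<Longrightarrow> h s = dirichlet_val d (symbol_phi c0 c s)"
  shows "h \<in> wd_algebra"
    and "wd_norm h \<le> (\<Sum>\<^sub>\<infinity>m\<in>{1..}. norm (d m) * real m powr (tail_norm c - Re (c 1)))"
proof -
  define I where "I = Sigma {1::nat..} (\<lambda>_. finite_tuples {2::nat..})"
  define w where "w = (\<lambda>(m, j). d m * phi_coeff c m j)"
  define lam where "lam = (\<lambda>(m, j). phi_freq c0 m j)"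
  have norm_sum: "((\<lambda>i. norm (w i)) has_sum
      (\<Sum>\<^sub>\<infinity>m\<in>{1..}. norm (d m) * real m powr (tail_norm c - Re (c 1)))) I"
    using has_sum_norm_comp_coeffs[OF c d] unfolding I_def w_def by (simp add: case_prod_unfold)
  have lam: "lam i \<ge> 1" if "i \<in> I" for i
    using that phi_freq_ge_1 by (auto simp: I_def lam_def)
  have val: "h s = (\<Sum>\<^sub>\<infinity>i\<in>I. w i * of_nat (lam i) powr (- s))" if s: "0 \<le> Re s" for s
  proof -
    have "(\<lambda>i. w i * of_nat (lam i) powr (- s)) summable_on I"
      using summable_on_dirichlet_terms[OF has_sum_imp_summable[OF norm_sum] s]
      by (rule abs_summable_summable)
    then have "((\<lambda>i. w i * of_nat (lam i) powr (- s)) has_sum (\<Sum>\<^sub>\<infinity>i\<in>I. w i * of_nat (lam i) powr (- s)))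
        (Sigma {1..} (\<lambda>_. finite_tuples {2..}))"
      unfolding I_def by (rule has_sum_infsum)
    then have "((\<lambda>m. d m * of_nat m powr (- symbol_phi c0 c s))
        has_sum (\<Sum>\<^sub>\<infinity>i\<in>I. w i * of_nat (lam i) powr (- s))) {1..}"
    proof (rule has_sum_Sigma')
      fix m :: nat assume "m \<in> {1..}"
      then have m: "m \<ge> 1" by simp
      show "((\<lambda>j. w (m, j) * of_nat (lam (m, j)) powr (- s)) has_sum
          d m * of_nat m powr (- symbol_phi c0 c s)) (finite_tuples {2..})"
        using has_sum_cmult_right[OF has_sum_phi_coeff[OF c m s, of c0], of "d m"]
        by (simp add: w_def lam_def symbol_phi_eq[OF c s] mult.assoc)
    qed
    then show ?thesis
      using h[OF s] by (simp add: dirichlet_val_def infsumI)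
  qed
  show "h \<in> wd_algebra" and "wd_norm h \<le> (\<Sum>\<^sub>\<infinity>m\<in>{1..}. norm (d m) * real m powr (tail_norm c - Re (c 1)))"
    using wd_algebra_of_family[OF norm_sum lam val] by auto
qed

lemma summable_on_weighted_coeffs:
  assumes d: "(\<lambda>m. norm (d m)) summable_on {1..}" and le: "tail_norm c \<le> Re (c 1)"
  shows "(\<lambda>m. norm (d m) * real m powr (tail_norm c - Re (c 1))) summable_on {1..}"
    and "(\<Sum>\<^sub>\<infinity>m\<in>{1..}. norm (d m) * real m powr (tail_norm c - Re (c 1)))
           \<le> (\<Sum>\<^sub>\<infinity>m\<in>{1..}. norm (d m))"
proof -
  have weight: "norm (d m) * real m powr (tail_norm c - Re (c 1)) \<le> norm (d m)" for m
    using real_of_nat_powr_le_1[of "tail_norm c - Re (c 1)" m] le by (simp add: mult_left_le)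
  show sum: "(\<lambda>m. norm (d m) * real m powr (tail_norm c - Re (c 1))) summable_on {1..}"
    by (rule summable_on_comparison_test[OF d]) (use weight in auto)
  show "(\<Sum>\<^sub>\<infinity>m\<in>{1..}. norm (d m) * real m powr (tail_norm c - Re (c 1)))
          \<le> (\<Sum>\<^sub>\<infinity>m\<in>{1..}. norm (d m))"
    by (rule infsum_mono[OF sum d weight])
qed

section \<open>Boundedness\<close>

lemma wd_comp_symbol_phi:
  assumes c: "(\<lambda>n. norm (c n)) summable_on {2..}" and le: "tail_norm c \<le> Re (c 1)"
    and f: "wd_rep a f"
  shows "f \<circ> symbol_phi c0 c \<in> wd_algebra"
    and "wd_norm (f \<circ> symbol_phi c0 c) \<le> (\<Sum>\<^sub>\<infinity>n\<in>{1..}. norm (a n))"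
proof -
  have a: "(\<lambda>n. norm (a n)) summable_on {1..}" using f by (simp add: wd_rep_def)
  have "(f \<circ> symbol_phi c0 c) s = dirichlet_val a (symbol_phi c0 c s)" if "0 \<le> Re s" for s
    using f Re_symbol_phi_nonneg[OF c le that] by (simp add: wd_rep_def)
  note comp = wd_algebra_comp_dirichlet[OF c summable_on_weighted_coeffs(1)[OF a le] this]
  show "f \<circ> symbol_phi c0 c \<in> wd_algebra" by (rule comp(1))
  show "wd_norm (f \<circ> symbol_phi c0 c) \<le> (\<Sum>\<^sub>\<infinity>n\<in>{1..}. norm (a n))"
    using comp(2) summable_on_weighted_coeffs(2)[OF a le] by linarith
qed

lemma comp_op_bounded_symbol_phi:
  assumes c: "(\<lambda>n. norm (c n)) summable_on {2..}" and le: "tail_norm c \<le> Re (c 1)"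
  shows "comp_op_bounded (symbol_phi c0 c)"
  unfolding comp_op_bounded_def
proof (intro conjI ballI exI[of _ 1])
  fix f assume f: "f \<in> wd_algebra"
  then show "f \<circ> symbol_phi c0 c \<in> wd_algebra"
    using wd_comp_symbol_phi(1)[OF c le] unfolding wd_algebra_def by blast
  show "wd_norm (f \<circ> symbol_phi c0 c) \<le> 1 * wd_norm f"
    using wd_norm_greatest[OF f] wd_comp_symbol_phi(2)[OF c le] by simp
qed

section \<open>Compactness\<close>

lemma bounded_imp_pointwise_convergent_subseq:
  fixes a :: "nat \<Rightarrow> nat \<Rightarrow> 'a::{real_normed_vector, heine_borel}"
  assumes bound: "\<And>k n. norm (a k n) \<le> B"
  obtains r \<alpha> where "strict_mono r" and "\<And>n. (\<lambda>k. a (r k) n) \<longlonglongrightarrow> \<alpha> n"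
proof -
  define K :: "(nat \<Rightarrow> 'a) set" where "K = PiE UNIV (\<lambda>_. cball 0 B)"
  have "compactin (product_topology (\<lambda>_. euclidean) UNIV) K"
    unfolding K_def compactin_PiE by auto
  then have "seq_compact K"
    by (simp add: euclidean_product_topology compact_imp_seq_compact)
  moreover have "a k \<in> K" for k using bound by (auto simp: K_def)
  ultimately obtain \<alpha> r where r: "strict_mono r" and lim: "(a \<circ> r) \<longlonglongrightarrow> \<alpha>"
    unfolding seq_compact_def by meson
  have "(\<lambda>k. a (r k) n) \<longlonglongrightarrow> \<alpha> n" for n
    using continuous_on_tendsto_compose[OF continuous_on_product_coordinates[of n] lim]
    by (simp add: o_def)
  with r that show ?thesis by blast
qed

lemma l1_bounded_imp_pointwise_convergent_subseq:
  fixes a :: "nat \<Rightarrow> nat \<Rightarrow> 'a::{real_normed_vector, heine_borel}"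
  assumes sum: "\<And>k. (\<lambda>n. norm (a k n)) summable_on A"
    and le: "\<And>k. (\<Sum>\<^sub>\<infinity>n\<in>A. norm (a k n)) \<le> B"
  obtains r \<alpha> where "strict_mono r" and "\<And>n. n \<in> A \<Longrightarrow> (\<lambda>k. a (r k) n) \<longlonglongrightarrow> \<alpha> n"
    and "(\<lambda>n. norm (\<alpha> n)) summable_on A" and "(\<Sum>\<^sub>\<infinity>n\<in>A. norm (\<alpha> n)) \<le> B"
proof -
  have finite_le: "(\<Sum>n\<in>G. norm (a k n)) \<le> B" if "finite G" "G \<subseteq> A" for G k
    using finite_sum_le_infsum[OF sum that, of k] le[of k] by simp
  define b where "b k n = (if n \<in> A then a k n else 0)" for k n
  have "norm (b k n) \<le> B" for k n
    using finite_le[of "{n}" k] finite_le[of "{}" k] by (auto simp: b_def)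
  then obtain r \<alpha> where r: "strict_mono r" and lim_b: "\<And>n. (\<lambda>k. b (r k) n) \<longlonglongrightarrow> \<alpha> n"
    using bounded_imp_pointwise_convergent_subseq by blast
  have lim: "(\<lambda>k. a (r k) n) \<longlonglongrightarrow> \<alpha> n" if "n \<in> A" for n
    using lim_b[of n] that by (simp add: b_def)
  have finite_le_\<alpha>: "(\<Sum>n\<in>G. norm (\<alpha> n)) \<le> B" if G: "finite G" "G \<subseteq> A" for G
  proof (rule LIMSEQ_le_const2)
    show "(\<lambda>k. \<Sum>n\<in>G. norm (a (r k) n)) \<longlonglongrightarrow> (\<Sum>n\<in>G. norm (\<alpha> n))"
      using G by (intro tendsto_sum tendsto_norm lim) auto
  qed (use finite_le[OF G] in blast)
  have "(\<lambda>n. norm (\<alpha> n)) summable_on A"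
    by (rule nonneg_bdd_above_summable_on) (use finite_le_\<alpha> in \<open>auto intro!: bdd_aboveI[where M = B]\<close>)
  moreover from this have "(\<Sum>\<^sub>\<infinity>n\<in>A. norm (\<alpha> n)) \<le> B"
    by (rule infsum_le_finite_sums) (rule finite_le_\<alpha>)
  ultimately show ?thesis using that r lim by blast
qed

lemma infsum_weighted_le_split:
  fixes x w :: "nat \<Rightarrow> real"
  assumes x_nonneg: "\<And>m. 0 \<le> x m" and x_sum: "x summable_on A"
    and w_nonneg: "\<And>m. 0 \<le> w m" and w_le: "\<And>m. w m \<le> 1"
    and w_tail: "\<And>m. m \<ge> M \<Longrightarrow> w m \<le> \<eta>"
  shows "(\<Sum>\<^sub>\<infinity>m\<in>A. x m * w m) \<le> (\<Sum>m\<in>A \<inter> {..<M}. x m) + \<eta> * infsum x A"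
proof -
  have \<eta>: "0 \<le> \<eta>" using w_nonneg[of M] w_tail[of M] by simp
  define head where "head m = (if m < M then x m else 0)" for m
  have head_sum: "head summable_on A"
    by (rule summable_on_cong_neutral[THEN iffD1, of _ "A \<inter> {..<M}"]) (auto simp: head_def)
  have head_eq: "infsum head A = (\<Sum>m\<in>A \<inter> {..<M}. x m)"
    using infsum_cong_neutral[of "A \<inter> {..<M}" A x head] by (auto simp: head_def)
  have "x m * w m \<le> head m + \<eta> * x m" for m
  proof (cases "m < M")
    case True
    then show ?thesis
      using mult_left_le[OF w_le[of m] x_nonneg[of m]] mult_nonneg_nonneg[OF \<eta> x_nonneg[of m]]
      by (simp add: head_def)
  next
    case False
    then show ?thesis
      using mult_left_mono[OF w_tail x_nonneg, of m m] by (simp add: head_def mult.commute)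
  qed
  then have "(\<Sum>\<^sub>\<infinity>m\<in>A. x m * w m) \<le> (\<Sum>\<^sub>\<infinity>m\<in>A. head m + \<eta> * x m)"
    by (intro infsum_mono summable_on_add head_sum summable_on_cmult_right x_sum
        summable_on_comparison_test[OF x_sum])
       (auto intro: mult_left_le mult_nonneg_nonneg x_nonneg w_nonneg w_le)
  also have "\<dots> = (\<Sum>m\<in>A \<inter> {..<M}. x m) + \<eta> * infsum x A"
    using infsum_add[OF head_sum summable_on_cmult_right[OF x_sum]] head_eq
    by (simp add: infsum_cmult_right')
  finally show ?thesis .
qed

lemma weighted_infsum_tendsto_zero:
  fixes x :: "nat \<Rightarrow> nat \<Rightarrow> real" and w :: "nat \<Rightarrow> real"
  assumes x_nonneg: "\<And>k m. 0 \<le> x k m"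
    and x_sum: "\<And>k. x k summable_on A" and x_le: "\<And>k. infsum (x k) A \<le> B"
    and x_lim: "\<And>m. m \<in> A \<Longrightarrow> (\<lambda>k. x k m) \<longlonglongrightarrow> 0"
    and w_lim: "w \<longlonglongrightarrow> 0" and w_nonneg: "\<And>m. 0 \<le> w m" and w_le: "\<And>m. w m \<le> 1"
  shows "(\<lambda>k. \<Sum>\<^sub>\<infinity>m\<in>A. x k m * w m) \<longlonglongrightarrow> 0"
proof (rule LIMSEQ_I)
  fix \<epsilon> :: real assume \<epsilon>: "0 < \<epsilon>"
  have B: "0 \<le> B" using x_le[of 0] infsum_nonneg[of A "x 0"] x_nonneg by fastforce
  define \<eta> where "\<eta> = \<epsilon> / (2 * (B + 1))"
  have \<eta>: "0 < \<eta>" "\<eta> * B < \<epsilon> / 2"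
    using \<epsilon> B by (auto simp: \<eta>_def field_simps)
  obtain M where M: "\<And>m. m \<ge> M \<Longrightarrow> w m \<le> \<eta>"
    using order_tendstoD(2)[OF w_lim \<eta>(1)] unfolding eventually_sequentially
    by (meson less_imp_le)
  define T where "T k = (\<Sum>m\<in>A \<inter> {..<M}. x k m)" for k
  have "T \<longlonglongrightarrow> 0"
    unfolding T_def by (rule tendsto_null_sum) (use x_lim in auto)
  then have "eventually (\<lambda>k. T k < \<epsilon> / 2) sequentially"
    using \<epsilon> by (intro order_tendstoD(2)) auto
  then obtain N where N: "\<And>k. k \<ge> N \<Longrightarrow> T k < \<epsilon> / 2"
    unfolding eventually_sequentially by blast
  have "norm ((\<Sum>\<^sub>\<infinity>m\<in>A. x k m * w m) - 0) < \<epsilon>" if "k \<ge> N" for k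
  proof -
    have "(\<Sum>\<^sub>\<infinity>m\<in>A. x k m * w m) \<le> T k + \<eta> * infsum (x k) A"
      unfolding T_def by (rule infsum_weighted_le_split[OF x_nonneg x_sum w_nonneg w_le M])
    also have "\<dots> \<le> T k + \<eta> * B"
      using x_le[of k] \<eta>(1) by simp
    finally have "(\<Sum>\<^sub>\<infinity>m\<in>A. x k m * w m) < \<epsilon>"
      using N[OF that] \<eta>(2) by simp
    moreover have "0 \<le> (\<Sum>\<^sub>\<infinity>m\<in>A. x k m * w m)"
      by (rule infsum_nonneg) (simp add: x_nonneg w_nonneg)
    ultimately show ?thesis by simp
  qed
  then show "\<exists>N. \<forall>k\<ge>N. norm ((\<Sum>\<^sub>\<infinity>m\<in>A. x k m * w m) - 0) < \<epsilon>" by blast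
qed

lemma wd_rep_seq_below_norm:
  assumes "\<And>k. F k \<in> wd_algebra" and "\<And>k. wd_norm (F k) < B"
  obtains a where "\<And>k. wd_rep (a k) (F k)" and "\<And>k. (\<Sum>\<^sub>\<infinity>n\<in>{1..}. norm (a k n)) < B"
proof -
  have "\<exists>a. \<forall>k. wd_rep (a k) (F k) \<and> (\<Sum>\<^sub>\<infinity>n\<in>{1..}. norm (a k n)) < B"
  proof (rule choice, rule allI)
    fix k
    show "\<exists>a. wd_rep a (F k) \<and> (\<Sum>\<^sub>\<infinity>n\<in>{1..}. norm (a n)) < B"
      by (rule wd_rep_below_norm[OF assms]) blast
  qed
  with that show ?thesis by blast
qed

lemma wd_comp_symbol_phi_diff:
  fixes c0 :: nat
  assumes c: "(\<lambda>n. norm (c n)) summable_on {2..}" and le: "tail_norm c \<le> Re (c 1)"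
    and f: "wd_rep a f" and b: "(\<lambda>m. norm (b m)) summable_on {1..}"
  defines "h \<equiv> \<lambda>s. (f \<circ> symbol_phi c0 c) s - dirichlet_val b (symbol_phi c0 c s)"
  shows "h \<in> wd_algebra"
    and "wd_norm h \<le> (\<Sum>\<^sub>\<infinity>m\<in>{1..}. norm (a m - b m) * real m powr (tail_norm c - Re (c 1)))"
proof -
  have a: "(\<lambda>m. norm (a m)) summable_on {1..}" using f by (simp add: wd_rep_def)
  have "h s = dirichlet_val (\<lambda>m. a m - b m) (symbol_phi c0 c s)" if "0 \<le> Re s" for s
    using f Re_symbol_phi_nonneg[OF c le that]
    by (simp add: h_def wd_rep_def dirichlet_val_diff[OF a b])
  note comp = wd_algebra_comp_dirichlet[OF c summable_on_weighted_coeffs(1)[OF summable_on_norm_diff(1)[OF a b] le] this]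
  show "h \<in> wd_algebra" by (rule comp(1))
  show "wd_norm h \<le> (\<Sum>\<^sub>\<infinity>m\<in>{1..}. norm (a m - b m) * real m powr (tail_norm c - Re (c 1)))"
    by (rule comp(2))
qed

lemma comp_op_compact_symbol_phi:
  assumes c: "(\<lambda>n. norm (c n)) summable_on {2..}" and lt: "tail_norm c < Re (c 1)"
  shows "comp_op_compact (symbol_phi c0 c)"
  unfolding comp_op_compact_def
proof (intro conjI allI impI)
  let ?\<phi> = "symbol_phi c0 c" and ?w = "\<lambda>m. real m powr (tail_norm c - Re (c 1))"
  have le: "tail_norm c \<le> Re (c 1)" using lt by simp
  show "\<forall>f\<in>wd_algebra. f \<circ> ?\<phi> \<in> wd_algebra"
    using comp_op_bounded_symbol_phi[OF c le] by (simp add: comp_op_bounded_def)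
  fix F :: "nat \<Rightarrow> complex \<Rightarrow> complex"
  assume F: "\<forall>k. F k \<in> wd_algebra \<and> wd_norm (F k) \<le> 1"
  have F_alg: "F k \<in> wd_algebra" and F_lt: "wd_norm (F k) < 2" for k
    using F[rule_format, of k] by auto
  obtain a where a_rep: "\<And>k. wd_rep (a k) (F k)"
    and a_le: "\<And>k. (\<Sum>\<^sub>\<infinity>n\<in>{1..}. norm (a k n)) < 2"
    by (rule wd_rep_seq_below_norm[of F 2, OF F_alg F_lt]) (rule that)
  have a_sum: "\<And>k. (\<lambda>n. norm (a k n)) summable_on {1..}"
    using a_rep by (simp add: wd_rep_def)
  obtain r \<alpha> where r: "strict_mono r" and \<alpha>_lim: "\<And>n. n \<in> {1..} \<Longrightarrow> (\<lambda>k. a (r k) n) \<longlonglongrightarrow> \<alpha> n"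
    and \<alpha>_sum: "(\<lambda>n. norm (\<alpha> n)) summable_on {1..}" and \<alpha>_le: "(\<Sum>\<^sub>\<infinity>n\<in>{1..}. norm (\<alpha> n)) \<le> 2"
    by (rule l1_bounded_imp_pointwise_convergent_subseq[of a "{1..}" 2, OF a_sum less_imp_le[OF a_le]])
       (rule that)
  define g where "g s = dirichlet_val \<alpha> (?\<phi> s)" for s
  have g: "g \<in> wd_algebra"
    by (rule wd_algebra_comp_dirichlet(1)[OF c summable_on_weighted_coeffs(1)[OF \<alpha>_sum le]])
       (simp add: g_def)
  define x where "x k m = norm (a (r k) m - \<alpha> m)" for k m
  have x_sum: "x k summable_on {1..}" for k
    unfolding x_def by (rule summable_on_norm_diff(1)[OF a_sum \<alpha>_sum])
  have x_le: "infsum (x k) {1..} \<le> 4" for k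
    using summable_on_norm_diff(2)[OF a_sum \<alpha>_sum, of "r k"] a_le[of "r k"] \<alpha>_le
    unfolding x_def by linarith
  have dist: "(\<lambda>s. (F (r k) \<circ> ?\<phi>) s - g s) \<in> wd_algebra"
    "wd_norm (\<lambda>s. (F (r k) \<circ> ?\<phi>) s - g s) \<le> (\<Sum>\<^sub>\<infinity>m\<in>{1..}. x k m * ?w m)" for k
    using wd_comp_symbol_phi_diff[OF c le a_rep \<alpha>_sum] by (simp_all add: g_def x_def)
  have "(\<lambda>k. \<Sum>\<^sub>\<infinity>m\<in>{1..}. x k m * ?w m) \<longlonglongrightarrow> 0"
  proof (rule weighted_infsum_tendsto_zero[OF _ x_sum x_le])
    show "(\<lambda>k. x k m) \<longlonglongrightarrow> 0" if "m \<in> {1..}" for m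
      using tendsto_diff[OF \<alpha>_lim[OF that] tendsto_const[of "\<alpha> m"]]
      by (simp add: x_def tendsto_norm_zero_iff LIM_zero_iff)
    show "?w \<longlonglongrightarrow> 0"
      using lt by (intro tendsto_neg_powr filterlim_real_sequentially) auto
    show "?w m \<le> 1" for m
      using le by (intro real_of_nat_powr_le_1) simp
  qed (simp_all add: x_def)
  then have "(\<lambda>k. wd_norm (\<lambda>s. (F (r k) \<circ> ?\<phi>) s - g s)) \<longlonglongrightarrow> 0"
    by (rule tendsto_sandwich[rotated 2, OF tendsto_const]) (use dist wd_norm_nonneg in auto)
  then show "\<exists>r g. strict_mono r \<and> g \<in> wd_algebra \<and>
      (\<lambda>k. wd_norm (\<lambda>s. (F (r k) \<circ> ?\<phi>) s - g s)) \<longlonglongrightarrow> 0"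
    using r g by (intro exI[of _ r] exI[of _ g] conjI)
qed

theorem corollary5:
  fixes c0 :: nat and c :: "nat \<Rightarrow> complex"
  assumes summ: "(\<lambda>n. norm (c n)) summable_on {2..}"
    and nonconst: "\<not> (\<exists>k. \<forall>s. 0 \<le> Re s \<longrightarrow> symbol_phi c0 c s = k)"
  shows "(Re (c 1) \<ge> (\<Sum>\<^sub>\<infinity>n\<in>{2..}. norm (c n)) \<longrightarrow> comp_op_bounded (symbol_phi c0 c)) \<and>
         (Re (c 1) > (\<Sum>\<^sub>\<infinity>n\<in>{2..}. norm (c n)) \<longrightarrow> comp_op_compact (symbol_phi c0 c))"
  using comp_op_bounded_symbol_phi[OF summ] comp_op_compact_symbol_phi[OF summ]
  unfolding tail_norm_def by blast

end
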